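(* Let $n$ and $k$ be even positive integers with $n>k$. Then $\mathrm{msum}(n,k)=1$.
   Context: Let $n,k$ be positive integers with $n>k$ and let $S_n$ be the set of permutations $\pi=(\pi_1,\dots,\pi_n)$ of $1,\dots,n$. Indices are taken cyclically: $\pi_{n+i}=\pi_i$. The $k$-consecutive sums of $\pi$ are $s_i=\sum_{j=0}^{k-1}\pi_{i+j}$ for $i=1,\dots,n$. Define $\mathrm{msum}(\pi,k)=\max\{s_i: 1\le i\le n\}-\frac{k(n+1)}{2}$ and $\mathrm{msum}(n,k)=\min\{\mathrm{msum}(\pi,k):\pi\in S_n\}$. *)

theory Defs
  imports "HOL-Combinatorics.Permutations" Complex_Main
begin

text \<open>A permutation pi of 1..n is represented by a bijection p of {1..n}
  (p permutes {1..n}), with pi_i = p i. Cyclic index: pi_{n+i} = pi_i.\<close>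

definition cyc :: "nat \<Rightarrow> (nat \<Rightarrow> nat) \<Rightarrow> nat \<Rightarrow> nat" where
  "cyc n p i = p (((i - 1) mod n) + 1)"

definition ksum :: "nat \<Rightarrow> nat \<Rightarrow> (nat \<Rightarrow> nat) \<Rightarrow> nat \<Rightarrow> nat" where
  "ksum n k p i = (\<Sum>j<k. cyc n p (i + j))"

definition msum_perm :: "nat \<Rightarrow> nat \<Rightarrow> (nat \<Rightarrow> nat) \<Rightarrow> real" where
  "msum_perm n k p = real (Max {ksum n k p i | i. i \<in> {1..n}}) - real k * (real n + 1) / 2"

definition msum :: "nat \<Rightarrow> nat \<Rightarrow> real" where
  "msum n k = Min {msum_perm n k p | p. p permutes {1..n}}"

end

theory Submission
  imports Defs "HOL-Number_Theory.Cong"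
begin

(* Write n = 2m and k = 2l. Summed over all n cyclic windows every entry is counted k times,
   so the window sums average k(n+1)/2 = l(n+1); windows 1 and 2 differ by p(k+1) - p(1) \<noteq> 0,
   hence some window sum is at least l(n+1) + 1.
   Conversely, fill positions 2t and 2t+1 with m - f(t) and m + 1 + f(t), where f is an
   m-periodic bijection of {0..<m}: each such pair sums to n + 1, so a window starting at an
   even position sums to l(n+1), and one starting at 2t+1 to l(n+1) + f(t) - f(t+l).
   It remains to choose f with f(t) \<le> f(t+l) + 1. The orbits of t \<mapsto> t + l modulo m are the
   residue classes modulo g = gcd l m, each of length d = m/g; numbering the orbits and counting
   down along each orbit yields such an f. *)

section \<open>The lower bound\<close>

lemma sum_lessThan_shift_periodic:
  fixes h :: "nat \<Rightarrow> 'a::cancel_comm_monoid_add"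
  assumes periodic: "\<And>y. h (y + n) = h y"
  shows "(\<Sum>y<n. h (y + j)) = (\<Sum>y<n. h y)"
proof (induction j)
  case (Suc j)
  have "(\<Sum>y<n. h (y + Suc j)) + h j = (\<Sum>y<Suc n. h (y + j))"
    using sum.lessThan_Suc_shift[of "\<lambda>y. h (y + j)" n] by (simp add: add.commute)
  also have "\<dots> = (\<Sum>y<n. h (y + j)) + h j"
    using periodic[of j] by (simp add: add.commute)
  finally show ?case using Suc by simp
qed simp

lemma sum_cyc_shift:
  assumes "0 < n"
  shows "(\<Sum>i\<in>{1..n}. cyc n p (i + j)) = (\<Sum>x\<in>{1..n}. p x)"
proof -
  have "(\<Sum>i\<in>{1..n}. cyc n p (i + j)) = (\<Sum>y<n. p ((y + j) mod n + 1))"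
    by (simp add: sum.atLeast1_atMost_eq cyc_def)
  also have "\<dots> = (\<Sum>y<n. p (y mod n + 1))"
    by (rule sum_lessThan_shift_periodic[where h = "\<lambda>y. p (y mod n + 1)"]) simp
  also have "\<dots> = (\<Sum>x\<in>{1..n}. p x)"
    by (simp add: sum.atLeast1_atMost_eq)
  finally show ?thesis .
qed

lemma double_sum_ksum:
  assumes "p permutes {1..n}" "0 < n"
  shows "2 * (\<Sum>i\<in>{1..n}. ksum n k p i) = k * n * (n + 1)"
proof -
  have "(\<Sum>i\<in>{1..n}. ksum n k p i) = (\<Sum>j<k. \<Sum>i\<in>{1..n}. cyc n p (i + j))"
    unfolding ksum_def by (rule sum.swap)
  also have "\<dots> = k * (\<Sum>x\<in>{1..n}. p x)"
    using sum_cyc_shift[OF assms(2)] by simp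
  also have "(\<Sum>x\<in>{1..n}. p x) = (\<Sum>x\<in>{1..n}. x)"
    using sum.permute[OF assms(1), of "\<lambda>x. x"] by simp
  finally have "2 * (\<Sum>i\<in>{1..n}. ksum n k p i) = k * (2 * (\<Sum>x\<in>{1..n}. x))"
    by simp
  also have "2 * (\<Sum>x\<in>{1..n}. x) = n * (n + 1)"
    using double_gauss_sum_from_Suc_0[of n, where ?'a = nat] by simp
  finally show ?thesis by (simp only: mult.assoc)
qed

lemma ksum_Suc:
  "ksum n k p i + cyc n p (i + k) = cyc n p i + ksum n k p (Suc i)"
  unfolding ksum_def
  using sum.lessThan_Suc_shift[of "\<lambda>j. cyc n p (i + j)" k] by simp

lemma sum_less_card_mult_Max:
  fixes f :: "'a \<Rightarrow> nat"
  assumes "finite A" "x \<in> A" "y \<in> A" "f x \<noteq> f y"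
  shows "sum f A < card A * Max (f ` A)"
proof -
  have le_Max: "f z \<le> Max (f ` A)" if "z \<in> A" for z
    using assms(1) that by simp
  have "\<exists>z\<in>A. f z < Max (f ` A)"
    using le_Max[OF assms(2)] le_Max[OF assms(3)] assms by (metis le_neq_implies_less)
  then have "sum f A < (\<Sum>z\<in>A. Max (f ` A))"
    using assms(1) le_Max by (intro sum_strict_mono_ex1) auto
  then show ?thesis by simp
qed

lemma Max_ksum_gt:
  assumes p: "p permutes {1..n}" and "0 < k" "k < n"
  shows "k * (n + 1) < 2 * Max {ksum n k p i | i. i \<in> {1..n}}"
proof -
  have "p (k + 1) \<noteq> p 1"
    using inj_eq[OF permutes_inj[OF p]] assms(2) by simp
  moreover have "cyc n p 1 = p 1" "cyc n p (1 + k) = p (k + 1)"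
    using assms(3) by (simp_all add: cyc_def)
  ultimately have "ksum n k p 1 \<noteq> ksum n k p 2"
    using ksum_Suc[of n k p 1] by (auto simp: numeral_2_eq_2)
  then have "(\<Sum>i\<in>{1..n}. ksum n k p i) < n * Max (ksum n k p ` {1..n})"
    using sum_less_card_mult_Max[of "{1..n}" 1 2 "ksum n k p"] assms(2,3) by simp
  then have "n * (k * (n + 1)) < n * (2 * Max (ksum n k p ` {1..n}))"
    using double_sum_ksum[OF p, of k] assms(2,3) by (simp add: algebra_simps)
  then show ?thesis unfolding Setcompr_eq_image by simp
qed

section \<open>A permutation attaining the bound\<close>

definition zigzag :: "nat \<Rightarrow> (nat \<Rightarrow> nat) \<Rightarrow> nat \<Rightarrow> nat" where
  "zigzag m f y = (if even y then m - f (y div 2) else m + 1 + f (y div 2))"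

lemma zigzag_pair:
  assumes "f t < m"
  shows "zigzag m f (2 * t) + zigzag m f (2 * t + 1) = 2 * m + 1"
  using assms by (simp add: zigzag_def)

lemma sum_zigzag_even:
  assumes "\<And>t. f t < m"
  shows "(\<Sum>j<2 * l. zigzag m f (2 * t + j)) = l * (2 * m + 1)"
proof (induction l)
  case (Suc l)
  have "(\<Sum>j<2 * Suc l. zigzag m f (2 * t + j))
      = (\<Sum>j<2 * l. zigzag m f (2 * t + j))
        + (zigzag m f (2 * (t + l)) + zigzag m f (2 * (t + l) + 1))"
    by (simp add: algebra_simps)
  then show ?case
    using Suc zigzag_pair[where f = f and m = m and t = "t + l", OF assms] by simp
qed simp

lemma sum_zigzag_odd:
  assumes "\<And>t. f t < m"
  shows "(\<Sum>j<2 * l. zigzag m f (2 * t + 1 + j)) + f (t + l) = l * (2 * m + 1) + f t"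
proof -
  let ?z = "zigzag m f"
  have "(\<Sum>j<2 * l. ?z (2 * t + 1 + j)) + ?z (2 * (t + l) + 1)
      = ?z (2 * t + 1) + (\<Sum>j<2 * l. ?z (2 * (t + 1) + j))"
    using sum.lessThan_Suc_shift[of "\<lambda>j. ?z (2 * t + 1 + j)" "2 * l"]
    by (simp add: algebra_simps)
  moreover have "?z (2 * (t + l) + 1) = m + 1 + f (t + l)" "?z (2 * t + 1) = m + 1 + f t"
    by (simp_all add: zigzag_def)
  ultimately show ?thesis
    using sum_zigzag_even[where f = f and m = m and l = l and t = "t + 1", OF assms] by simp
qed

lemma sum_zigzag_le:
  assumes "\<And>t. f t < m" and step: "\<And>t. f t \<le> f (t + l) + 1"
  shows "(\<Sum>j<2 * l. zigzag m f (y + j)) \<le> l * (2 * m + 1) + 1"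
proof (cases "even y")
  case True
  then obtain t where "y = 2 * t" by blast
  then show ?thesis
    using sum_zigzag_even[where f = f and m = m, OF assms(1)] by simp
next
  case False
  then obtain t where "y = 2 * t + 1" by (blast elim: oddE)
  then show ?thesis
    using sum_zigzag_odd[where f = f and m = m and l = l and t = t, OF assms(1)] step[of t]
    by simp
qed

lemma zigzag_mod:
  assumes "\<And>t. f (t mod m) = f t"
  shows "zigzag m f (y mod (2 * m)) = zigzag m f y"
proof -
  have "y mod (2 * m) = 2 * (y div 2 mod m) + y mod 2"
    by (rule mod_mult2_eq)
  then have "(y mod (2 * m)) div 2 = y div 2 mod m" "even (y mod (2 * m)) \<longleftrightarrow> even y"
    by (simp_all add: even_iff_mod_2_eq_zero)
  then show ?thesis
    using assms by (simp add: zigzag_def)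
qed

lemma zigzag_inj:
  assumes less: "\<And>t. f t < m" and inj: "inj_on f {..<m}"
  shows "inj_on (zigzag m f) {..<2 * m}"
proof (rule inj_onI)
  fix x y
  assume "x \<in> {..<2 * m}" "y \<in> {..<2 * m}" and eq: "zigzag m f x = zigzag m f y"
  have "even z \<longleftrightarrow> zigzag m f z \<le> m" for z
    using less[of "z div 2"] by (simp add: zigzag_def)
  then have parity: "even x \<longleftrightarrow> even y"
    using eq by simp
  then have "f (x div 2) = f (y div 2)"
    using eq less[of "x div 2"] less[of "y div 2"] by (auto simp: zigzag_def split: if_splits)
  moreover have "x div 2 \<in> {..<m}" "y div 2 \<in> {..<m}"
    using \<open>x \<in> {..<2 * m}\<close> \<open>y \<in> {..<2 * m}\<close> by auto
  ultimately have "x div 2 = y div 2"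
    using inj by (simp add: inj_on_eq_iff)
  then show "x = y"
    using parity by (metis div_mult_mod_eq parity_cases)
qed

lemma zigzag_range:
  assumes "\<And>t. f t < m"
  shows "zigzag m f y \<in> {1..2 * m}"
  using assms[of "y div 2"] by (auto simp: zigzag_def)

definition zigzag_perm :: "nat \<Rightarrow> (nat \<Rightarrow> nat) \<Rightarrow> nat \<Rightarrow> nat" where
  "zigzag_perm m f x = (if x \<in> {1..2 * m} then zigzag m f (x - 1) else x)"

lemma zigzag_perm_permutes:
  assumes "\<And>t. f t < m" "inj_on f {..<m}"
  shows "zigzag_perm m f permutes {1..2 * m}"
proof (rule inj_imp_permutes)
  show "inj_on (zigzag_perm m f) {1..2 * m}"
  proof (rule inj_onI)
    fix x y
    assume x: "x \<in> {1..2 * m}" and y: "y \<in> {1..2 * m}"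
      and "zigzag_perm m f x = zigzag_perm m f y"
    then have "zigzag m f (x - 1) = zigzag m f (y - 1)"
      by (simp add: zigzag_perm_def)
    moreover have "x - 1 \<in> {..<2 * m}" "y - 1 \<in> {..<2 * m}"
      using x y by auto
    ultimately have "x - 1 = y - 1"
      using zigzag_inj[OF assms] by (simp add: inj_on_eq_iff)
    then show "x = y"
      using x y eq_diff_iff[of 1 x y] by simp
  qed
  show "zigzag_perm m f x \<in> {1..2 * m}" if "x \<in> {1..2 * m}" for x
    using that zigzag_range[where f = f and m = m, OF assms(1)] by (simp add: zigzag_perm_def)
  show "zigzag_perm m f x = x" if "x \<notin> {1..2 * m}" for x
    unfolding zigzag_perm_def using that by (rule if_not_P)
qed simp

lemma cyc_zigzag_perm:
  assumes "0 < m" "\<And>t. f (t mod m) = f t" "1 \<le> i"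
  shows "cyc (2 * m) (zigzag_perm m f) i = zigzag m f (i - 1)"
proof -
  have "(i - 1) mod (2 * m) + 1 \<in> {1..2 * m}"
    using assms(1) by (simp add: Suc_leI)
  then have "cyc (2 * m) (zigzag_perm m f) i = zigzag m f ((i - 1) mod (2 * m))"
    by (simp add: cyc_def zigzag_perm_def)
  also have "\<dots> = zigzag m f (i - 1)"
    by (rule zigzag_mod[where f = f and m = m, OF assms(2)])
  finally show ?thesis .
qed

text \<open>With \<open>l = l' * g\<close>, \<open>m = g * d\<close> and \<open>u\<close> inverse to \<open>l'\<close> modulo \<open>d\<close>, the residue
  \<open>t mod g\<close> names the orbit of \<open>t\<close> under \<open>t \<mapsto> t + l\<close> and \<open>t div g * u mod d\<close> is the
  position of \<open>t\<close> within it, which grows by one at each step.\<close>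

definition orbit_code :: "nat \<Rightarrow> nat \<Rightarrow> nat \<Rightarrow> nat \<Rightarrow> nat" where
  "orbit_code g d u t = t mod g * d + (d - 1 - t div g * u mod d)"

lemma orbit_code_less:
  assumes "0 < g" "0 < d"
  shows "orbit_code g d u t < g * d"
proof -
  have "(t mod g + 1) * d \<le> g * d"
    using assms by (intro mult_le_mono1) (simp add: Suc_leI)
  then show ?thesis
    using assms by (simp add: orbit_code_def algebra_simps)
qed

lemma orbit_code_mod:
  assumes "0 < g"
  shows "orbit_code g d u (t mod (g * d)) = orbit_code g d u t"
proof -
  have "t mod (g * d) = g * (t div g mod d) + t mod g"
    by (rule mod_mult2_eq)
  then have "t mod (g * d) mod g = t mod g" "t mod (g * d) div g = t div g mod d"
    using assms by simp_all
  then show ?thesis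
    by (simp add: orbit_code_def mod_mult_left_eq)
qed

lemma orbit_code_step:
  assumes "0 < g" "0 < d" "[l' * u = 1] (mod d)"
  shows "orbit_code g d u t \<le> orbit_code g d u (t + l' * g) + 1"
proof -
  define q where "q = t div g * u mod d"
  have "q < d"
    unfolding q_def using assms(2) by simp
  have "(t + l' * g) div g * u mod d = (q + l' * u mod d) mod d"
    using assms(1) by (simp add: q_def algebra_simps mod_add_eq)
  also have "\<dots> = (q + 1) mod d"
    using assms(3) by (simp add: cong_def mod_add_right_eq)
  finally have "(t + l' * g) div g * u mod d = (q + 1) mod d" .
  moreover have "(t + l' * g) mod g = t mod g"
    by simp
  ultimately show ?thesis
    using \<open>q < d\<close> by (cases "q + 1 < d") (simp_all add: orbit_code_def q_def)
qed

lemma orbit_code_inj: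
  assumes "0 < g" "coprime u d"
  shows "inj_on (orbit_code g d u) {..<g * d}"
proof (rule inj_onI)
  fix t1 t2
  assume t1: "t1 \<in> {..<g * d}" and t2: "t2 \<in> {..<g * d}"
    and eq: "orbit_code g d u t1 = orbit_code g d u t2"
  then have "0 < d"
    by (cases d) auto
  have code_div: "orbit_code g d u t div d = t mod g"
    and code_mod: "orbit_code g d u t mod d = d - 1 - t div g * u mod d" for t
    using \<open>0 < d\<close> by (simp_all add: orbit_code_def)
  have "t1 mod g = t2 mod g"
    using code_div[of t1] code_div[of t2] eq by simp
  have "d - 1 - t1 div g * u mod d = d - 1 - t2 div g * u mod d"
    using code_mod[of t1] code_mod[of t2] eq by simp
  moreover have "t1 div g * u mod d < d" "t2 div g * u mod d < d"
    using \<open>0 < d\<close> by simp_all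
  ultimately have "t1 div g * u mod d = t2 div g * u mod d"
    by linarith
  then have "[t1 div g = t2 div g] (mod d)"
    using cong_mult_rcancel_nat[OF assms(2)] by (simp add: cong_def)
  moreover have "t1 div g < d" "t2 div g < d"
    using t1 t2 by (simp_all add: div_less_iff_less_mult assms(1) mult.commute)
  ultimately have "t1 div g = t2 div g"
    by (simp add: cong_def)
  with \<open>t1 mod g = t2 mod g\<close> show "t1 = t2"
    by (metis div_mult_mod_eq)
qed

lemma exists_perm_ksum_le:
  assumes n: "n = 2 * m" and k: "k = 2 * l" and "0 < l" "l < m"
  shows "\<exists>p. p permutes {1..n} \<and> (\<forall>i\<in>{1..n}. ksum n k p i \<le> l * (n + 1) + 1)"
proof -
  define g where "g = gcd l m"
  define d where "d = m div g"
  define l' where "l' = l div g"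
  have "0 < g" "m = g * d" "l = l' * g"
    using assms by (simp_all add: g_def d_def l'_def)
  then have "0 < d"
    using assms(4) by (cases d) simp_all
  have "coprime l' d"
    using div_gcd_coprime[of l m] assms by (simp add: g_def d_def l'_def)
  then obtain u where u: "[l' * u = 1] (mod d)"
    using cong_solve_coprime_nat by auto
  then have "coprime u d"
    by (auto simp: coprime_iff_invertible_nat mult.commute)
  define f where "f = orbit_code g d u"
  have f_less: "f t < m" for t
    using orbit_code_less \<open>0 < g\<close> \<open>0 < d\<close> \<open>m = g * d\<close> by (simp add: f_def)
  have f_mod: "f (t mod m) = f t" for t
    using orbit_code_mod \<open>0 < g\<close> \<open>m = g * d\<close> by (simp add: f_def)
  have f_step: "f t \<le> f (t + l) + 1" for t
    using orbit_code_step[OF \<open>0 < g\<close> \<open>0 < d\<close> u] \<open>l = l' * g\<close> by (simp add: f_def)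
  have "inj_on f {..<m}"
    using orbit_code_inj[OF \<open>0 < g\<close> \<open>coprime u d\<close>] \<open>m = g * d\<close> by (simp add: f_def)
  then have "zigzag_perm m f permutes {1..n}"
    using zigzag_perm_permutes[where f = f and m = m] f_less n by simp
  moreover have "ksum n k (zigzag_perm m f) i \<le> l * (n + 1) + 1" if "i \<in> {1..n}" for i
  proof -
    have "ksum n k (zigzag_perm m f) i = (\<Sum>j<2 * l. zigzag m f (i - 1 + j))"
      unfolding ksum_def n k using that assms(3,4)
      by (intro sum.cong) (simp_all add: cyc_zigzag_perm f_mod)
    then show ?thesis
      using sum_zigzag_le[where f = f and m = m, OF f_less f_step] n by simp
  qed
  ultimately show ?thesis
    by blast
qed

theorem theorem1p2:
  fixes n k :: nat
  assumes "even n" and "even k" and "0 < k" and "k < n"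
  shows "msum n k = 1"
proof -
  obtain m l where n: "n = 2 * m" and k: "k = 2 * l"
    using assms(1,2) by blast
  have average: "real k * (real n + 1) / 2 = real (l * (n + 1))"
    using k by (simp add: algebra_simps)
  have lower: "1 \<le> msum_perm n k p" if "p permutes {1..n}" for p
  proof -
    have "l * (n + 1) + 1 \<le> Max {ksum n k p i | i. i \<in> {1..n}}"
      using Max_ksum_gt[OF that assms(3,4)] k by simp
    then show ?thesis
      unfolding msum_perm_def average by linarith
  qed
  obtain p where p: "p permutes {1..n}" "\<forall>i\<in>{1..n}. ksum n k p i \<le> l * (n + 1) + 1"
    using exists_perm_ksum_le[OF n k] assms(3,4) n k by auto
  have "Max {ksum n k p i | i. i \<in> {1..n}} \<le> l * (n + 1) + 1"
    unfolding Setcompr_eq_image using p(2) assms(4) by simp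
  then have "msum_perm n k p = 1"
    using lower[OF p(1)] unfolding msum_perm_def average by linarith
  moreover have "finite {msum_perm n k p | p. p permutes {1..n}}"
    unfolding Setcompr_eq_image by (simp add: finite_permutations)
  ultimately show ?thesis
    unfolding msum_def using lower p(1) by (intro Min_eqI) auto
qed

end
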